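(* Let $\alpha=\sum_{c\in C}w_c$, so that $\mathcal{C}_\sigma:[-1,1]^n\times\mathbb{R}^m\to[-\alpha,\alpha]$, with $\sigma>0$. Let $\beta$ be the maximum number of occurrences of any single continuous variable within a constraint, and $\gamma=\frac{\sqrt2\,\beta}{\sqrt\pi\,\sigma}$. Then for any $(a',b'),(a,b)\in[-1,1]^n\times\mathbb{R}^m$, $$|\mathcal{C}_\sigma(a',b')-\mathcal{C}_\sigma(a,b)|\le\rho\big(\|a'-a\|^2+\|b'-b\|^2\big)^{1/2},\qquad \|\nabla\mathcal{C}_\sigma(a',b')-\nabla\mathcal{C}_\sigma(a,b)\|\le L\big(\|a'-a\|^2+\|b'-b\|^2\big)^{1/2},$$ where $\rho=\alpha\sqrt{n+m}\max(1,\gamma)$ and $L=\sqrt{n+m\gamma^2}\,\rho$. As a consequence, $$\Big|\mathcal{C}_\sigma(a',b')-\mathcal{C}_\sigma(a,b)-\langle\nabla_a\mathcal{C}_\sigma(a,b),a'-a\rangle-\langle\nabla_b\mathcal{C}_\sigma(a,b),b'-b\rangle\Big|\le\frac L2\big(\|a'-a\|^2+\|b'-b\|^2\big).$$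
   Context: Truth values: $-1$ = True, $+1$ = False. Propositional variables $x\in\{\pm1\}^n$, real variables $y\in\mathbb{R}^m$; atoms $\alpha_i:\ \sum_j q_{i,j}y_j-q_{i,0}\bowtie_i0$ ($i=1,\dots,k$, coefficient vector $q_i=(q_{i,1},\dots,q_{i,m})\neq0$) with $\delta_i(y)=-1$ if $\alpha_i$ holds at $y$, else $+1$. $C$ is a finite set of constraints (Boolean combinations of propositional variables and atoms) with weights $w_c>0$; $c$ is represented by $f_c(x,y)=\tilde f_c(x,\delta(y))\in\{\pm1\}$ ($-1$ iff true) with coefficients $\hat f_c(S,T)=\mathbb{E}_{(x,z)\text{ uniform on }\{\pm1\}^{n+k}}[\tilde f_c(x,z)\prod_{i\in S}x_i\prod_{i\in T}z_i]$. Let $d_i(b)=\mathbb{E}_{y\sim\mathcal{N}(b,\sigma^2I)}[\delta_i(y)]$, which for an atom $\sum_j q_{i,j}y_j\le q_{i,0}$ equals $\mathrm{erf}\big((\sum_jq_{i,j}b_j-q_{i,0})/(\sqrt2\|q_i\|\sigma)\big)$. The smoothed objective is $\mathcal{C}_\sigma(a,b)=\sum_{c\in C}w_c\sum_{S\subseteq[n],T\subseteq[k]}\hat f_c(S,T)\prod_{i\in S}a_i\prod_{i\in T}d_i(b)$. "Occurrences of a variable $y_j$ within a constraint" means the number of atoms of that constraint in which $y_j$ has nonzero coefficient. *)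

theory Defs
  imports "HOL-Analysis.Analysis"
begin

definition erf :: "real \<Rightarrow> real" where
  "erf x = 2 / sqrt pi *
     (if 0 \<le> x then integral {0..x} (\<lambda>t. exp (- t\<^sup>2))
      else - integral {x..0} (\<lambda>t. exp (- t\<^sup>2)))"

text \<open>Comparison operator of an atom  q . y - q0  (rel)  0.\<close>
datatype cmp = Le | Lt | Ge | Gt | Eq | Neq

text \<open>d_i(b) = E_{y ~ N(b, sigma^2 I)} [delta_i(y)], where delta_i(y) = -1 iff the atom holds.\<close>
definition atom_mean ::
  "real \<Rightarrow> cmp \<Rightarrow> real ^ 'm \<Rightarrow> real \<Rightarrow> real ^ 'm \<Rightarrow> real" where
  "atom_mean \<sigma> r q q0 b =
     (let u = erf ((q \<bullet> b - q0) / (sqrt 2 * norm q * \<sigma>)) in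
      (case r of Le \<Rightarrow> u | Lt \<Rightarrow> u | Ge \<Rightarrow> - u | Gt \<Rightarrow> - u | Eq \<Rightarrow> 1 | Neq \<Rightarrow> -1))"

definition cubeN :: "('n::finite \<Rightarrow> real) set" where
  "cubeN = PiE UNIV (\<lambda>_. {-1, 1})"

definition cubeK :: "nat \<Rightarrow> (nat \<Rightarrow> real) set" where
  "cubeK k = PiE {..<k} (\<lambda>_. {-1, 1})"

definition fourier_coeff ::
  "nat \<Rightarrow> (('n::finite \<Rightarrow> real) \<Rightarrow> (nat \<Rightarrow> real) \<Rightarrow> real) \<Rightarrow> 'n set \<Rightarrow> nat set \<Rightarrow> real" where
  "fourier_coeff k f S T =
     (\<Sum>x\<in>cubeN. \<Sum>z\<in>cubeK k. f x z * (\<Prod>i\<in>S. x i) * (\<Prod>i\<in>T. z i))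
       / 2 ^ (CARD('n) + k)"

definition smoothed_obj ::
  "real \<Rightarrow> nat \<Rightarrow> (nat \<Rightarrow> cmp) \<Rightarrow> (nat \<Rightarrow> real ^ 'm) \<Rightarrow> (nat \<Rightarrow> real)
   \<Rightarrow> 'c set \<Rightarrow> ('c \<Rightarrow> real) \<Rightarrow> ('c \<Rightarrow> ('n::finite \<Rightarrow> real) \<Rightarrow> (nat \<Rightarrow> real) \<Rightarrow> real)
   \<Rightarrow> (real ^ 'n) \<times> (real ^ 'm) \<Rightarrow> real" where
  "smoothed_obj \<sigma> k rel q q0 C w f p =
     (\<Sum>c\<in>C. w c * (\<Sum>S\<in>Pow (UNIV :: 'n set). \<Sum>T\<in>Pow {..<k}.
        fourier_coeff k (f c) S T * (\<Prod>i\<in>S. fst p $ i)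
          * (\<Prod>i\<in>T. atom_mean \<sigma> (rel i) (q i) (q0 i) (snd p))))"

definition grad :: "('a::real_inner \<Rightarrow> real) \<Rightarrow> 'a \<Rightarrow> 'a" where
  "grad f x = (SOME g. (f has_derivative (\<lambda>h. g \<bullet> h)) (at x))"

end

(*
  For a constraint c, the Fourier sum defining its term of C_sigma (a, b) is the multilinear
  extension of f c, viewed as a +-1 valued function on the cube indexed by the propositional
  variables and the atoms, evaluated at (a, d(b)); the atoms outside A c may be replaced by 0
  there. On [-1,1]^I all mixed partial derivatives of order at most two of such an extension are
  bounded by 1, and |erf'| <= 2/sqrt pi, |erf''| <= 4/pi. Hence along a segment the first and
  second directional derivatives of C_sigma, in directions h and u, are bounded by alpha Z(h) and
  alpha Z(u) Z(h), where Z(h) is the sum of the |h_j| over the propositional coordinates and of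
  the slopes 2/sqrt pi |q_i . h_b| / (sqrt 2 |q_i| sigma) over the atoms. Since each y_l occurs
  in at most beta atoms of a constraint, Cauchy-Schwarz gives Z(h) <= sqrt (n + m gamma^2) |h|.
  The mean value theorem then yields the three bounds: directly for C_sigma, for
  t |-> grad C_sigma (p + t h) . u with u the increment of the gradient, and for the first-order
  remainder by the usual descent-lemma argument.
*)

theory Submission
  imports Defs "HOL-Probability.Distributions"
begin

section \<open>The error function\<close>

definition erf' :: "real \<Rightarrow> real" where
  "erf' x = 2 / sqrt pi * exp (- x\<^sup>2)"

definition erf'' :: "real \<Rightarrow> real" where
  "erf'' x = - 2 * x * erf' x"

lemma erf_has_real_derivative: "(erf has_real_derivative erf' x) (at x)"
proof -
  define g where "g = (\<lambda>t::real. exp (- t\<^sup>2))"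
  define R where "R = \<bar>x\<bar> + 1"
  define F where "F = (\<lambda>u. 2 / sqrt pi * (integral {-R..u} g - integral {-R..0} g))"
  have g_cont: "continuous_on S g" for S
    unfolding g_def by (intro continuous_intros)
  note g_int = integrable_continuous_interval[OF g_cont]
  have erf_eq_F: "erf u = F u" if "u \<in> {-R<..<R}" for u
  proof (cases "0 \<le> u")
    case True
    have "integral {-R..0} g + integral {0..u} g = integral {-R..u} g"
      using that True by (intro Henstock_Kurzweil_Integration.integral_combine g_int) (auto simp: R_def)
    then show ?thesis using True unfolding erf_def F_def g_def by simp
  next
    case False
    have "integral {-R..u} g + integral {u..0} g = integral {-R..0} g"
      using that False by (intro Henstock_Kurzweil_Integration.integral_combine g_int) (auto simp: R_def)
    then have "integral {u..0} g = integral {-R..0} g - integral {-R..u} g"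
      by linarith
    then show ?thesis using False unfolding erf_def F_def g_def by (simp add: diff_divide_distrib)
  qed
  have "((\<lambda>u. integral {-R..u} g) has_vector_derivative g x) (at x within {-R..R})"
    by (rule integral_has_vector_derivative[OF g_cont]) (auto simp: R_def abs_if)
  then have "((\<lambda>u. integral {-R..u} g) has_real_derivative g x) (at x)"
    by (subst (asm) at_within_interior[of x]) (auto simp: R_def has_real_derivative_iff_has_vector_derivative)
  then have "(F has_real_derivative 2 / sqrt pi * (g x - 0)) (at x)"
    unfolding F_def by (intro DERIV_cmult DERIV_diff DERIV_const)
  then have "(F has_real_derivative erf' x) (at x)"
    by (simp add: erf'_def g_def)
  then show ?thesis
    by (rule has_field_derivative_transform_within_open[where S = "{-R<..<R}"])
       (auto simp: R_def erf_eq_F)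
qed

lemma erf'_has_real_derivative: "(erf' has_real_derivative erf'' x) (at x)"
  unfolding erf'_def[abs_def] erf''_def erf'_def
  by (rule derivative_eq_intros refl)+ (simp add: mult_ac)

lemma DERIV_fun_erf:
  "(f has_real_derivative f') (at x) \<Longrightarrow> ((\<lambda>x. erf (f x)) has_real_derivative erf' (f x) * f') (at x)"
  using DERIV_chain2[OF erf_has_real_derivative] .

lemma DERIV_fun_erf':
  "(f has_real_derivative f') (at x) \<Longrightarrow> ((\<lambda>x. erf' (f x)) has_real_derivative erf'' (f x) * f') (at x)"
  using DERIV_chain2[OF erf'_has_real_derivative] .

lemma integral_exp_neg_square_le:
  assumes "0 \<le> x"
  shows "integral {0..x} (\<lambda>t. exp (- t\<^sup>2)) \<le> sqrt pi / 2"
proof -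
  have "integrable lborel (\<lambda>t::real. indicator {0..} t * exp (- t\<^sup>2))"
    and "integral\<^sup>L lborel (\<lambda>t::real. indicator {0..} t * exp (- t\<^sup>2)) = sqrt pi / 2"
    using gaussian_moment_0 by (auto simp: has_bochner_integral_iff)
  then have "((\<lambda>t::real. indicator {0..} t * exp (- t\<^sup>2)) has_integral sqrt pi / 2) UNIV"
    using has_integral_integral_lborel by metis
  moreover have "(\<lambda>t::real. indicator {0..} t * exp (- t\<^sup>2)) = (\<lambda>t. if t \<in> {0..} then exp (- t\<^sup>2) else 0)"
    by (auto simp: indicator_def)
  ultimately have "((\<lambda>t. if t \<in> {0..} then exp (- t\<^sup>2) else 0) has_integral sqrt pi / 2) UNIV"
    by metis
  then have half_line: "((\<lambda>t. exp (- t\<^sup>2)) has_integral sqrt pi / 2) {0..}"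
    by (rule has_integral_restrict_UNIV[THEN iffD1])
  have "integral {0..x} (\<lambda>t. exp (- t\<^sup>2)) \<le> integral {0..} (\<lambda>t. exp (- t\<^sup>2))"
    using half_line by (intro integral_subset_le integrable_continuous_interval continuous_intros)
      (auto simp: has_integral_integrable)
  then show ?thesis
    using integral_unique[OF half_line] by simp
qed

lemma abs_erf: "\<bar>erf x\<bar> = 2 / sqrt pi * integral {0..\<bar>x\<bar>} (\<lambda>t. exp (- t\<^sup>2))"
proof -
  have nonneg: "0 \<le> integral {a..b} (\<lambda>t::real. exp (- t\<^sup>2))" for a b
    by (intro integral_nonneg integrable_continuous_interval continuous_intros) auto
  show ?thesis
  proof (cases "0 \<le> x")
    case False
    have "integral {x..0} (\<lambda>t. exp (- t\<^sup>2)) = integral {0..-x} (\<lambda>t. exp (- t\<^sup>2))"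
      using Henstock_Kurzweil_Integration.integral_reflect_real[of "-x" 0 "\<lambda>t. exp (- t\<^sup>2)"] by simp
    then show ?thesis using False nonneg[of x 0] by (simp add: erf_def abs_mult)
  qed (use nonneg[of 0 x] in \<open>simp add: erf_def abs_mult\<close>)
qed

lemma abs_erf_le_1: "\<bar>erf x\<bar> \<le> 1"
proof -
  have "\<bar>erf x\<bar> \<le> 2 / sqrt pi * (sqrt pi / 2)"
    unfolding abs_erf by (intro mult_left_mono integral_exp_neg_square_le) auto
  then show ?thesis by simp
qed

lemma abs_erf'_le: "\<bar>erf' x\<bar> \<le> 2 / sqrt pi"
  using mult_left_mono[of "exp (- x\<^sup>2)" 1 "2 / sqrt pi"] by (simp add: erf'_def)

lemma abs_erf''_le: "\<bar>erf'' x\<bar> \<le> (2 / sqrt pi)\<^sup>2"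
proof -
  have "2 * \<bar>x\<bar> \<le> 1 + x\<^sup>2"
    using zero_le_power2[of "\<bar>x\<bar> - 1"] by (simp add: power2_diff)
  also have "\<dots> \<le> exp (x\<^sup>2)"
    by (rule exp_ge_add_one_self)
  finally have "2 * \<bar>x\<bar> * exp (- x\<^sup>2) \<le> 1"
    by (simp add: exp_minus field_simps)
  moreover have "1 \<le> 2 / sqrt pi"
    using real_sqrt_le_mono[of pi 4] pi_less_4 by simp
  ultimately have "2 * \<bar>x\<bar> * exp (- x\<^sup>2) \<le> 2 / sqrt pi"
    by linarith
  then have "2 / sqrt pi * (2 * \<bar>x\<bar> * exp (- x\<^sup>2)) \<le> 2 / sqrt pi * (2 / sqrt pi)"
    by (rule mult_left_mono) simp
  then show ?thesis
    by (simp add: erf''_def erf'_def abs_mult power2_eq_square mult_ac)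
qed

section \<open>Multilinear extensions on the cube\<close>

definition cube :: "'i set \<Rightarrow> ('i \<Rightarrow> real) set" where
  "cube I = PiE I (\<lambda>_. {-1, 1})"

(* For K \<subseteq> I: the mixed partial derivative d_K, at y, of the multilinear extension
   y \<mapsto> \<Sum>v\<in>{-1,1}^I. g v * (\<Prod>r\<in>I. (1 + v r * y r) / 2) of g; K = {} gives the extension. *)
definition multilinear_deriv ::
  "'i set \<Rightarrow> (('i \<Rightarrow> real) \<Rightarrow> real) \<Rightarrow> 'i set \<Rightarrow> ('i \<Rightarrow> real) \<Rightarrow> real" where
  "multilinear_deriv I g K y =
     (\<Sum>v\<in>cube I. g v * ((\<Prod>r\<in>K. v r / 2) * (\<Prod>r\<in>I - K. (1 + v r * y r) / 2)))"

lemma finite_cube: "finite I \<Longrightarrow> finite (cube I)"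
  unfolding cube_def by (intro finite_PiE) auto

lemma abs_cube_apply: "v \<in> cube I \<Longrightarrow> r \<in> I \<Longrightarrow> \<bar>v r\<bar> = 1"
  unfolding cube_def by (auto simp: PiE_iff)

lemma cube_flip: "v \<in> cube I \<Longrightarrow> r \<in> I \<Longrightarrow> v(r := - v r) \<in> cube I"
  unfolding cube_def by (auto simp: PiE_iff extensional_def)

lemma sum_cube_prod_abs:
  assumes "finite I" "J \<subseteq> I" "\<forall>r\<in>J. \<bar>y r\<bar> \<le> 1"
  shows "(\<Sum>v\<in>cube I. \<Prod>r\<in>J. \<bar>(1 + v r * y r) / 2\<bar>) = 2 ^ card (I - J)"
proof -
  define h where "h r s = (if r \<in> J then \<bar>(1 + s * y r) / 2\<bar> else 1)" for r and s :: real
  have "(\<Prod>r\<in>J. \<bar>(1 + v r * y r) / 2\<bar>) = (\<Prod>r\<in>I. h r (v r))" for v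
  proof -
    have "(\<Prod>r\<in>I. h r (v r)) = (\<Prod>r\<in>J. h r (v r))"
      using assms(1,2) by (intro prod.mono_neutral_right) (auto simp: h_def)
    also have "\<dots> = (\<Prod>r\<in>J. \<bar>(1 + v r * y r) / 2\<bar>)"
      by (intro prod.cong refl) (simp add: h_def)
    finally show ?thesis ..
  qed
  then have "(\<Sum>v\<in>cube I. \<Prod>r\<in>J. \<bar>(1 + v r * y r) / 2\<bar>) = (\<Sum>v\<in>cube I. \<Prod>r\<in>I. h r (v r))"
    by simp
  also have "\<dots> = (\<Prod>r\<in>I. \<Sum>s\<in>{-1, 1}. h r s)"
    unfolding cube_def using assms(1) by (intro prod_sum_PiE[symmetric]) auto
  also have "\<dots> = (\<Prod>r\<in>I - J. 2)"
  proof (rule prod.mono_neutral_cong_right[OF assms(1)])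
    show "\<forall>r\<in>I - (I - J). (\<Sum>s\<in>{-1, 1}. h r s) = 1"
    proof
      fix r assume "r \<in> I - (I - J)"
      with assms(3) have "r \<in> J" "-1 \<le> y r" "y r \<le> 1"
        by auto
      then show "(\<Sum>s\<in>{-1, 1}. h r s) = 1"
        by (simp add: h_def abs_of_nonneg field_simps)
    qed
  qed (auto simp: h_def)
  also have "\<dots> = 2 ^ card (I - J)"
    by simp
  finally show ?thesis .
qed

lemma abs_multilinear_deriv_le_1:
  assumes "finite I" "K \<subseteq> I" "\<forall>v\<in>cube I. \<bar>g v\<bar> \<le> 1" "\<forall>r\<in>I - K. \<bar>y r\<bar> \<le> 1"
  shows "\<bar>multilinear_deriv I g K y\<bar> \<le> 1"
proof -
  have "\<bar>multilinear_deriv I g K y\<bar>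
      \<le> (\<Sum>v\<in>cube I. (1 / 2) ^ card K * (\<Prod>r\<in>I - K. \<bar>(1 + v r * y r) / 2\<bar>))"
    unfolding multilinear_deriv_def
  proof (rule order_trans[OF sum_abs sum_mono])
    fix v assume v: "v \<in> cube I"
    have "\<bar>\<Prod>r\<in>K. v r / 2\<bar> = (\<Prod>r\<in>K. 1 / 2)"
      unfolding abs_prod using v assms(2) by (intro prod.cong refl) (auto simp: abs_cube_apply)
    moreover have "\<bar>g v\<bar> * \<bar>(\<Prod>r\<in>K. v r / 2) * (\<Prod>r\<in>I - K. (1 + v r * y r) / 2)\<bar>
        \<le> \<bar>(\<Prod>r\<in>K. v r / 2) * (\<Prod>r\<in>I - K. (1 + v r * y r) / 2)\<bar>"
      using assms(3) v by (intro mult_left_le_one_le) auto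
    ultimately show "\<bar>g v * ((\<Prod>r\<in>K. v r / 2) * (\<Prod>r\<in>I - K. (1 + v r * y r) / 2))\<bar>
        \<le> (1 / 2) ^ card K * (\<Prod>r\<in>I - K. \<bar>(1 + v r * y r) / 2\<bar>)"
      by (simp add: abs_mult abs_prod)
  qed
  also have "\<dots> = (1 / 2) ^ card K * 2 ^ card (I - (I - K))"
    using sum_cube_prod_abs[OF assms(1), of "I - K" y] assms(4)
    by (simp add: sum_distrib_left[symmetric])
  also have "I - (I - K) = K"
    using assms(2) by blast
  finally show ?thesis
    by (simp add: power_one_over)
qed

lemma multilinear_deriv_has_real_derivative:
  assumes "finite I" "K \<subseteq> I"
    and "\<And>r. r \<in> I - K \<Longrightarrow> ((\<lambda>t. y t r) has_real_derivative y' r) (at t)"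
  shows "((\<lambda>t. multilinear_deriv I g K (y t)) has_real_derivative
           (\<Sum>r\<in>I - K. y' r * multilinear_deriv I g (insert r K) (y t))) (at t)"
proof -
  let ?m = "\<lambda>v s t. (1 + v s * y t s) / 2"
  let ?P = "\<lambda>v K. \<Prod>s\<in>K. v s / 2"
  let ?Q = "\<lambda>v K. \<Prod>s\<in>I - K. ?m v s t"
  have "finite K"
    using assms(1,2) finite_subset by blast
  have factor_deriv: "((\<lambda>t. ?m v r t) has_real_derivative v r * y' r / 2) (at t)" if "r \<in> I - K" for v r
    using assms(3)[OF that] by (auto intro!: derivative_eq_intros)
  have "((\<lambda>t. \<Prod>s\<in>I - K. ?m v s t) has_real_derivative
      (\<Sum>r\<in>I - K. v r * y' r / 2 * (\<Prod>s\<in>I - K - {r}. ?m v s t))) (at t)" for v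
    by (rule has_field_derivative_prod[where f = "\<lambda>s t. ?m v s t" and f' = "\<lambda>r. v r * y' r / 2"])
       (rule factor_deriv)
  then have "((\<lambda>t. multilinear_deriv I g K (y t)) has_real_derivative
      (\<Sum>v\<in>cube I. g v * (?P v K * (\<Sum>r\<in>I - K. v r * y' r / 2 * (\<Prod>s\<in>I - K - {r}. ?m v s t))))) (at t)"
    unfolding multilinear_deriv_def by (intro DERIV_sum DERIV_cmult)
  also have "(\<Sum>v\<in>cube I. g v * (?P v K * (\<Sum>r\<in>I - K. v r * y' r / 2 * (\<Prod>s\<in>I - K - {r}. ?m v s t))))
      = (\<Sum>v\<in>cube I. \<Sum>r\<in>I - K. y' r * (g v * (?P v (insert r K) * ?Q v (insert r K))))"
  proof -
    have factor: "?P v K * (v r * y' r / 2 * (\<Prod>s\<in>I - K - {r}. ?m v s t))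
        = y' r * (?P v (insert r K) * ?Q v (insert r K))" if "r \<in> I - K" for v r
    proof -
      have "I - insert r K = I - K - {r}"
        by blast
      with \<open>finite K\<close> that show ?thesis
        by (simp add: mult_ac)
    qed
    show ?thesis
      unfolding sum_distrib_left by (intro sum.cong refl) (simp only: factor mult.left_commute)
  qed
  also have "\<dots> = (\<Sum>r\<in>I - K. y' r * multilinear_deriv I g (insert r K) (y t))"
    unfolding multilinear_deriv_def by (subst sum.swap) (simp add: sum_distrib_left)
  finally show ?thesis .
qed

lemma multilinear_deriv_cong:
  assumes "\<And>r. r \<in> I \<Longrightarrow> y r = y' r"
  shows "multilinear_deriv I g K y = multilinear_deriv I g K y'"
proof -
  have "(\<Prod>r\<in>I - K. (1 + v r * y r) / 2) = (\<Prod>r\<in>I - K. (1 + v r * y' r) / 2)" for v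
    using assms by (intro prod.cong refl) auto
  then show ?thesis
    by (simp add: multilinear_deriv_def)
qed

lemma multilinear_ext_eq_fun_upd:
  assumes "finite I" "r \<in> I"
  shows "multilinear_deriv I g {} y
           = multilinear_deriv I g {} (y(r := 0)) + y r * multilinear_deriv I g {r} y"
proof -
  define R where "R v = (\<Prod>s\<in>I - {r}. (1 + v s * y s) / 2)" for v
  have "(\<Prod>s\<in>I. (1 + v s * y s) / 2) = (1 + v r * y r) / 2 * R v" for v
    unfolding R_def using assms by (rule prod.remove)
  moreover have "(\<Prod>s\<in>I. (1 + v s * (y(r := 0)) s) / 2) = 1 / 2 * R v" for v
  proof -
    have "(\<Prod>s\<in>I - {r}. (1 + v s * (y(r := 0)) s) / 2) = R v"
      unfolding R_def by (intro prod.cong refl) auto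
    then show ?thesis
      using prod.remove[OF assms, of "\<lambda>s. (1 + v s * (y(r := 0)) s) / 2"] by simp
  qed
  ultimately have "g v * (1 * (\<Prod>s\<in>I. (1 + v s * y s) / 2))
      = g v * (1 * (\<Prod>s\<in>I. (1 + v s * (y(r := 0)) s) / 2)) + y r * (g v * (v r / 2 * R v))" for v
    by (simp add: field_simps)
  then show ?thesis
    by (simp add: multilinear_deriv_def R_def sum.distrib sum_distrib_left)
qed

lemma multilinear_deriv_singleton_eq_0:
  assumes "finite I" "r \<in> I" "\<forall>v\<in>cube I. g (v(r := - v r)) = g v"
  shows "multilinear_deriv I g {r} y = 0"
proof -
  define flip where "flip v = v(r := - v r)" for v :: "'a \<Rightarrow> real"
  define R where "R v = (\<Prod>s\<in>I - {r}. (1 + v s * y s) / 2)" for v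
  have R_flip: "R (v(r := - v r)) = R v" for v
    unfolding R_def by (intro prod.cong refl) auto
  have "multilinear_deriv I g {r} y = (\<Sum>v\<in>cube I. g v * (v r / 2 * R v))"
    by (simp add: multilinear_deriv_def R_def)
  also have "\<dots> = (\<Sum>v\<in>cube I. g (flip v) * (flip v r / 2 * R (flip v)))"
    by (rule sum.reindex_bij_witness[where i = flip and j = flip])
       (auto simp: flip_def cube_flip assms(2))
  also have "\<dots> = - (\<Sum>v\<in>cube I. g v * (v r / 2 * R v))"
    using assms(3) by (simp add: R_flip flip_def sum_negf[symmetric])
  finally show ?thesis
    by (simp add: multilinear_deriv_def R_def)
qed

lemma multilinear_ext_eq_zero_irrelevant:
  assumes "finite I" "K \<subseteq> I" "\<forall>r\<in>K. \<forall>v\<in>cube I. g (v(r := - v r)) = g v"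
    and "\<forall>r\<in>I - K. y' r = y r" "\<forall>r\<in>K. y' r = 0"
  shows "multilinear_deriv I g {} y' = multilinear_deriv I g {} y"
proof -
  have "finite K"
    using assms(1,2) finite_subset by blast
  then show ?thesis
    using assms(2-)
  proof (induction K arbitrary: y' rule: finite_induct)
    case empty
    then show ?case by (intro multilinear_deriv_cong) auto
  next
    case (insert r K)
    define y'' where "y'' = y'(r := y r)"
    have "multilinear_deriv I g {} y'' = multilinear_deriv I g {} y"
    proof (rule insert.IH)
      show "K \<subseteq> I" "\<forall>s\<in>K. \<forall>v\<in>cube I. g (v(s := - v s)) = g v"
        using insert.prems(1,2) by blast+
      show "\<forall>s\<in>I - K. y'' s = y s" "\<forall>s\<in>K. y'' s = 0"
        using insert.prems(3,4) insert.hyps(2) by (auto simp: y''_def)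
    qed
    moreover have "y''(r := 0) = y'"
      using insert.prems by (auto simp: y''_def)
    moreover have "multilinear_deriv I g {r} y'' = 0"
      using insert.prems(1,2) by (intro multilinear_deriv_singleton_eq_0[OF assms(1)]) blast+
    ultimately show ?case
      using multilinear_ext_eq_fun_upd[OF assms(1), of r g y''] insert.prems by auto
  qed
qed

lemma abs_mult_le_of_abs_le_1: "\<bar>x\<bar> \<le> X \<Longrightarrow> \<bar>m\<bar> \<le> 1 \<Longrightarrow> \<bar>x * m\<bar> \<le> (X :: real)"
  using mult_left_le[of "\<bar>m\<bar>" "\<bar>x\<bar>"] by (simp add: abs_mult)

lemma abs_sum_multilinear_deriv_le:
  assumes "finite I" "\<forall>v\<in>cube I. \<bar>g v\<bar> \<le> 1" "\<forall>r\<in>I. \<bar>y r\<bar> \<le> 1" "\<forall>r\<in>I. \<bar>z r\<bar> \<le> Z r"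
  shows "\<bar>\<Sum>r\<in>I. z r * multilinear_deriv I g {r} y\<bar> \<le> sum Z I"
proof (rule order_trans[OF sum_abs sum_mono])
  fix r assume "r \<in> I"
  with assms show "\<bar>z r * multilinear_deriv I g {r} y\<bar> \<le> Z r"
    by (intro abs_mult_le_of_abs_le_1 abs_multilinear_deriv_le_1) auto
qed

lemma abs_sum_multilinear_deriv2_le:
  assumes "finite I" "\<forall>v\<in>cube I. \<bar>g v\<bar> \<le> 1" "\<forall>r\<in>I. \<bar>y r\<bar> \<le> 1"
    and "\<forall>r\<in>I. \<bar>z r\<bar> \<le> Z r" "\<forall>r\<in>I. \<bar>x r\<bar> \<le> X r" "\<forall>r\<in>I. \<bar>z' r\<bar> \<le> Z r * X r"
  shows "\<bar>\<Sum>r\<in>I. z r * (\<Sum>s\<in>I - {r}. x s * multilinear_deriv I g (insert s {r}) y)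
            + z' r * multilinear_deriv I g {r} y\<bar>
         \<le> sum Z I * sum X I"
proof -
  have "\<bar>z r * (\<Sum>s\<in>I - {r}. x s * multilinear_deriv I g (insert s {r}) y)
          + z' r * multilinear_deriv I g {r} y\<bar>
        \<le> Z r * (\<Sum>s\<in>I - {r}. X s) + Z r * X r" if r: "r \<in> I" for r
  proof -
    have "\<bar>\<Sum>s\<in>I - {r}. x s * multilinear_deriv I g (insert s {r}) y\<bar> \<le> (\<Sum>s\<in>I - {r}. X s)"
    proof (rule order_trans[OF sum_abs sum_mono])
      fix s assume "s \<in> I - {r}"
      with assms r show "\<bar>x s * multilinear_deriv I g (insert s {r}) y\<bar> \<le> X s"
        by (intro abs_mult_le_of_abs_le_1 abs_multilinear_deriv_le_1) auto
    qed
    moreover have "\<bar>z r\<bar> \<le> Z r"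
      using assms(4) r by blast
    ultimately have "\<bar>z r\<bar> * \<bar>\<Sum>s\<in>I - {r}. x s * multilinear_deriv I g (insert s {r}) y\<bar>
        \<le> Z r * (\<Sum>s\<in>I - {r}. X s)"
      by (intro mult_mono') simp_all
    moreover have "\<bar>z' r * multilinear_deriv I g {r} y\<bar> \<le> Z r * X r"
      using assms r by (intro abs_mult_le_of_abs_le_1 abs_multilinear_deriv_le_1) auto
    ultimately show ?thesis
      using abs_triangle_ineq[of "z r * (\<Sum>s\<in>I - {r}. x s * multilinear_deriv I g (insert s {r}) y)"
          "z' r * multilinear_deriv I g {r} y"]
      unfolding abs_mult by linarith
  qed
  then have "\<bar>\<Sum>r\<in>I. z r * (\<Sum>s\<in>I - {r}. x s * multilinear_deriv I g (insert s {r}) y)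
            + z' r * multilinear_deriv I g {r} y\<bar>
         \<le> (\<Sum>r\<in>I. Z r * (\<Sum>s\<in>I - {r}. X s) + Z r * X r)"
    by (intro order_trans[OF sum_abs sum_mono]) auto
  also have "\<dots> = (\<Sum>r\<in>I. Z r * sum X I)"
    using assms(1) by (intro sum.cong refl) (simp add: sum.remove distrib_left)
  finally show ?thesis
    by (simp add: sum_distrib_right)
qed

lemma cube_Plus_comp:
  assumes "v \<in> cube (A <+> B)"
  shows "v \<circ> Inl \<in> cube A" "v \<circ> Inr \<in> cube B"
  using assms unfolding cube_def by (auto simp: PiE_iff extensional_def)

lemma sum_cube_Plus:
  "(\<Sum>v\<in>cube (A <+> B). F v) = (\<Sum>x\<in>cube A. \<Sum>z\<in>cube B. F (case_sum x z))"
proof -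
  have "(\<Sum>v\<in>cube (A <+> B). F v) = (\<Sum>(x, z)\<in>cube A \<times> cube B. F (case_sum x z))"
  proof (rule sum.reindex_bij_witness[where i = "\<lambda>(x, z). case_sum x z" and j = "\<lambda>v. (v \<circ> Inl, v \<circ> Inr)"])
    fix v assume "v \<in> cube (A <+> B)"
    then show "(v \<circ> Inl, v \<circ> Inr) \<in> cube A \<times> cube B"
      by (simp add: cube_Plus_comp)
  next
    fix xz assume "xz \<in> cube A \<times> cube B"
    then show "(case xz of (x, z) \<Rightarrow> case_sum x z) \<in> cube (A <+> B)"
      by (auto simp: cube_def PiE_iff extensional_def split: sum.splits)
  qed (auto simp: surjective_sum comp_def split: prod.splits)
  then show ?thesis
    by (simp add: sum.cartesian_product)
qed

lemma sum_Pow_prod: "finite A \<Longrightarrow> (\<Sum>S\<in>Pow A. \<Prod>i\<in>S. u i) = (\<Prod>i\<in>A. 1 + (u i :: real))"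
  using prod_add[of A u "\<lambda>_. 1"] by (simp add: add.commute)

lemma fourier_expansion_eq_multilinear_ext:
  fixes F :: "('n::finite \<Rightarrow> real) \<Rightarrow> (nat \<Rightarrow> real) \<Rightarrow> real"
  shows "(\<Sum>S\<in>Pow UNIV. \<Sum>T\<in>Pow {..<k}. fourier_coeff k F S T * (\<Prod>i\<in>S. a i) * (\<Prod>i\<in>T. d i))
    = multilinear_deriv (UNIV <+> {..<k}) (\<lambda>v. F (v \<circ> Inl) (v \<circ> Inr)) {} (case_sum a d)"
proof -
  define N :: real where "N = 2 ^ (CARD('n) + k)"
  have sum_UNIV_prod: "(\<Sum>S\<in>UNIV. \<Prod>i\<in>S. u i) = (\<Prod>i\<in>UNIV. 1 + u i)" for u :: "'n \<Rightarrow> real"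
    using sum_Pow_prod[of "UNIV :: 'n set" u] by simp
  have "(\<Sum>S\<in>Pow UNIV. \<Sum>T\<in>Pow {..<k}. fourier_coeff k F S T * (\<Prod>i\<in>S. a i) * (\<Prod>i\<in>T. d i))
     = (\<Sum>S\<in>Pow UNIV. \<Sum>T\<in>Pow {..<k}. \<Sum>x\<in>cubeN. \<Sum>z\<in>cubeK k.
          F x z * (\<Prod>i\<in>S. x i * a i) * (\<Prod>i\<in>T. z i * d i) / N)"
    unfolding fourier_coeff_def N_def
    by (intro sum.cong refl)
       (simp add: sum_divide_distrib sum_distrib_left sum_distrib_right prod.distrib mult_ac)
  also have "\<dots> = (\<Sum>x\<in>cubeN. \<Sum>z\<in>cubeK k. \<Sum>S\<in>Pow UNIV. \<Sum>T\<in>Pow {..<k}.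
          F x z * (\<Prod>i\<in>S. x i * a i) * (\<Prod>i\<in>T. z i * d i) / N)"
    by (subst sum.swap, subst (2) sum.swap, subst (3) sum.swap, subst (2) sum.swap) (rule refl)
  also have "\<dots> = (\<Sum>x\<in>cubeN. \<Sum>z\<in>cubeK k. F x z * (\<Prod>j\<in>UNIV. (1 + x j * a j) / 2)
          * (\<Prod>i\<in>{..<k}. (1 + z i * d i) / 2))"
    by (simp add: sum_UNIV_prod sum_Pow_prod sum_divide_distrib[symmetric] sum_distrib_left[symmetric]
        sum_distrib_right[symmetric] prod_dividef N_def power_add mult_ac)
  also have "\<dots> = multilinear_deriv (UNIV <+> {..<k}) (\<lambda>v. F (v \<circ> Inl) (v \<circ> Inr)) {} (case_sum a d)"
    unfolding multilinear_deriv_def sum_cube_Plus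
    by (simp add: prod.Plus comp_def cubeN_def cubeK_def cube_def mult.assoc)
  finally show ?thesis .
qed

section \<open>Gradients and elementary estimates\<close>

lemma differentiable_prod:
  fixes f :: "'i \<Rightarrow> 'a::real_normed_vector \<Rightarrow> real"
  assumes "\<And>i. i \<in> I \<Longrightarrow> f i differentiable (at x)"
  shows "(\<lambda>x. \<Prod>i\<in>I. f i x) differentiable (at x)"
proof (cases "finite I")
  case True
  then show ?thesis
    using assms by (induction I rule: finite_induct) (auto intro: differentiable_mult)
qed simp

lemma has_derivative_grad:
  fixes F :: "'a::euclidean_space \<Rightarrow> real"
  assumes "F differentiable (at p)"
  shows "(F has_derivative (\<lambda>h. grad F p \<bullet> h)) (at p)"
proof -
  obtain D where D: "(F has_derivative D) (at p)"
    using assms unfolding differentiable_def by blast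
  have "D h = adjoint D 1 \<bullet> h" for h
    using adjoint_works[OF has_derivative_linear[OF D], of h 1] by (simp add: inner_commute)
  then have "\<exists>g. (F has_derivative (\<lambda>h. g \<bullet> h)) (at p)"
    using D by (metis ext)
  then show ?thesis
    unfolding grad_def by (rule someI_ex)
qed

lemma grad_inner_eq_line_deriv:
  fixes F :: "'a::euclidean_space \<Rightarrow> real"
  assumes "F differentiable (at p)" "((\<lambda>t. F (p + t *\<^sub>R h)) has_real_derivative D) (at 0)"
  shows "grad F p \<bullet> h = D"
proof -
  have line: "((\<lambda>t::real. p + t *\<^sub>R h) has_derivative (\<lambda>s. s *\<^sub>R h)) (at 0)"
    by (auto intro!: derivative_eq_intros)
  have "((\<lambda>t. F (p + t *\<^sub>R h)) has_derivative (\<lambda>s. s * (grad F p \<bullet> h))) (at 0)"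
    using diff_chain_at[OF line, of F "\<lambda>h. grad F p \<bullet> h"] has_derivative_grad[OF assms(1)]
    by (simp add: o_def)
  moreover have "((\<lambda>t. F (p + t *\<^sub>R h)) has_derivative (\<lambda>s. D * s)) (at 0)"
    using assms(2) by (simp add: has_field_derivative_def)
  ultimately have "(\<lambda>s. s * (grad F p \<bullet> h)) = (\<lambda>s. D * s)"
    by (rule has_derivative_unique)
  from fun_cong[OF this, of 1] show ?thesis
    by simp
qed

lemma abs_diff_le_of_deriv_bound:
  fixes \<phi> \<phi>' :: "real \<Rightarrow> real"
  assumes "\<And>t. 0 \<le> t \<Longrightarrow> t \<le> 1 \<Longrightarrow> (\<phi> has_real_derivative \<phi>' t) (at t)"
    and "\<And>t. 0 \<le> t \<Longrightarrow> t \<le> 1 \<Longrightarrow> \<bar>\<phi>' t\<bar> \<le> B"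
  shows "\<bar>\<phi> 1 - \<phi> 0\<bar> \<le> B"
proof -
  obtain z where "0 < z" "z < 1" "\<phi> 1 - \<phi> 0 = (1 - 0) * \<phi>' z"
    using MVT2[of 0 1 \<phi> \<phi>'] assms(1) by auto
  with assms(2)[of z] show ?thesis
    by simp
qed

lemma norm_diff_le_of_inner_deriv_bound:
  fixes G :: "real \<Rightarrow> 'a::real_inner"
  assumes "\<And>u t. 0 \<le> t \<Longrightarrow> t \<le> 1 \<Longrightarrow> ((\<lambda>t. G t \<bullet> u) has_real_derivative D u t) (at t)"
    and "\<And>u t. 0 \<le> t \<Longrightarrow> t \<le> 1 \<Longrightarrow> \<bar>D u t\<bar> \<le> K * norm u" and "0 \<le> K"
  shows "norm (G 1 - G 0) \<le> K"
proof -
  \<comment> \<open>test the increment against itself\<close>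
  define u where "u = G 1 - G 0"
  have "\<bar>G 1 \<bullet> u - G 0 \<bullet> u\<bar> \<le> K * norm u"
    using assms(1,2) by (rule abs_diff_le_of_deriv_bound)
  then have "norm u * norm u \<le> K * norm u"
    by (simp add: u_def inner_diff_left[symmetric] power2_norm_eq_inner[symmetric] power2_eq_square)
  then show ?thesis
    using assms(3) mult_right_le_imp_le[of "norm u" "norm u" K] unfolding u_def[symmetric]
    by (cases "norm u = 0") auto
qed

lemma abs_remainder_le_of_deriv_lipschitz:
  fixes \<phi> \<phi>' :: "real \<Rightarrow> real"
  assumes "\<And>t. 0 \<le> t \<Longrightarrow> t \<le> 1 \<Longrightarrow> (\<phi> has_real_derivative \<phi>' t) (at t)"
    and "\<And>t. 0 \<le> t \<Longrightarrow> t \<le> 1 \<Longrightarrow> \<bar>\<phi>' t - \<phi>' 0\<bar> \<le> M * t"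
  shows "\<bar>\<phi> 1 - \<phi> 0 - \<phi>' 0\<bar> \<le> M / 2"
proof -
  have "\<epsilon> * (\<phi> 1 - \<phi> 0 - \<phi>' 0) \<le> M / 2" if "\<bar>\<epsilon>\<bar> = 1" for \<epsilon>
  proof -
    let ?\<psi> = "\<lambda>t. \<epsilon> * (\<phi> t - t * \<phi>' 0) - M * t\<^sup>2 / 2"
    have "?\<psi> 1 \<le> ?\<psi> 0"
    proof (rule DERIV_nonpos_imp_nonincreasing[of 0 1 ?\<psi>])
      fix t :: real assume t: "0 \<le> t" "t \<le> 1"
      have "(?\<psi> has_real_derivative \<epsilon> * (\<phi>' t - \<phi>' 0) - M * t) (at t)"
        using assms(1)[OF t] by (auto intro!: derivative_eq_intros)
      moreover have "\<epsilon> * (\<phi>' t - \<phi>' 0) \<le> M * t"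
        using assms(2)[OF t] abs_ge_self[of "\<epsilon> * (\<phi>' t - \<phi>' 0)"] that by (simp add: abs_mult)
      ultimately show "\<exists>y. (?\<psi> has_real_derivative y) (at t) \<and> y \<le> 0"
        by force
    qed simp
    then show ?thesis
      by (simp add: algebra_simps)
  qed
  from this[of 1] this[of "-1"] show ?thesis
    unfolding abs_le_iff by simp
qed

lemma abs_segment_le:
  fixes x y t B :: real
  assumes "\<bar>x\<bar> \<le> B" "\<bar>y\<bar> \<le> B" "0 \<le> t" "t \<le> 1"
  shows "\<bar>x + t * (y - x)\<bar> \<le> B"
proof -
  have "\<bar>x + t * (y - x)\<bar> = \<bar>(1 - t) * x + t * y\<bar>"
    by (simp add: algebra_simps)
  also have "\<dots> \<le> (1 - t) * \<bar>x\<bar> + t * \<bar>y\<bar>"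
    using abs_triangle_ineq[of "(1 - t) * x" "t * y"] assms(3,4) by (simp add: abs_mult)
  also have "\<dots> \<le> (1 - t) * B + t * B"
    using assms by (intro add_mono mult_left_mono) auto
  finally show ?thesis
    by (simp add: algebra_simps)
qed

lemma sum_abs_le_sqrt_card_mult_norm:
  "(\<Sum>j\<in>UNIV. \<bar>x $ j\<bar>) \<le> sqrt (real CARD('n)) * norm (x :: real ^ 'n::finite)"
proof -
  have "(\<Sum>j\<in>UNIV. \<bar>x $ j\<bar> * \<bar>1::real\<bar>) \<le> L2_set (\<lambda>j. x $ j) UNIV * L2_set (\<lambda>_. 1::real) (UNIV :: 'n set)"
    by (rule L2_set_mult_ineq)
  moreover have "L2_set (\<lambda>j. x $ j) UNIV = norm x"
    unfolding norm_vec_def L2_set_def by simp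
  ultimately show ?thesis
    by (simp add: L2_set_constant mult.commute)
qed

lemma abs_inner_le_norm_mult_sum_support:
  fixes v u :: "real ^ 'm::finite"
  shows "\<bar>v \<bullet> u\<bar> \<le> norm v * (\<Sum>l\<in>UNIV. if v $ l \<noteq> 0 then \<bar>u $ l\<bar> else 0)"
proof -
  have "\<bar>v \<bullet> u\<bar> \<le> (\<Sum>l\<in>UNIV. \<bar>v $ l * u $ l\<bar>)"
    using sum_abs[of "\<lambda>l. v $ l * u $ l" UNIV] by (simp add: inner_vec_def)
  also have "\<dots> \<le> (\<Sum>l\<in>UNIV. norm v * (if v $ l \<noteq> 0 then \<bar>u $ l\<bar> else 0))"
    using component_le_norm_cart[of v] by (intro sum_mono) (auto simp: abs_mult intro: mult_right_mono)
  finally show ?thesis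
    by (simp add: sum_distrib_left)
qed

lemma sum_weighted_abs_le:
  fixes w X :: "'c \<Rightarrow> real"
  assumes "\<forall>c\<in>C. 0 \<le> w c" "\<forall>c\<in>C. \<bar>X c\<bar> \<le> B"
  shows "\<bar>\<Sum>c\<in>C. w c * X c\<bar> \<le> (\<Sum>c\<in>C. w c) * B"
proof -
  have "\<bar>\<Sum>c\<in>C. w c * X c\<bar> \<le> (\<Sum>c\<in>C. w c * B)"
    using assms by (intro order_trans[OF sum_abs sum_mono]) (auto simp: abs_mult intro: mult_left_mono)
  then show ?thesis
    by (simp add: sum_distrib_right)
qed

section \<open>The smoothed objective\<close>

definition cmp_sign :: "cmp \<Rightarrow> real" where
  "cmp_sign r = (case r of Le \<Rightarrow> 1 | Lt \<Rightarrow> 1 | Ge \<Rightarrow> -1 | Gt \<Rightarrow> -1 | Eq \<Rightarrow> 0 | Neq \<Rightarrow> 0)"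

definition cmp_offset :: "cmp \<Rightarrow> real" where
  "cmp_offset r = (case r of Eq \<Rightarrow> 1 | Neq \<Rightarrow> -1 | _ \<Rightarrow> 0)"

lemma atom_mean_eq:
  "atom_mean \<sigma> r q q0 b = cmp_sign r * erf ((q \<bullet> b - q0) / (sqrt 2 * norm q * \<sigma>)) + cmp_offset r"
  by (cases r) (simp_all add: atom_mean_def cmp_sign_def cmp_offset_def Let_def)

lemma abs_cmp_sign_le_1: "\<bar>cmp_sign r\<bar> \<le> 1"
  by (cases r) (simp_all add: cmp_sign_def)

lemma abs_atom_mean_le_1: "\<bar>atom_mean \<sigma> r q q0 b\<bar> \<le> 1"
  using abs_erf_le_1[of "(q \<bullet> b - q0) / (sqrt 2 * norm q * \<sigma>)"]
  by (cases r) (simp_all add: atom_mean_def Let_def)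

locale smoothed_objective =
  fixes \<sigma> :: real and k :: nat
    and rel :: "nat \<Rightarrow> cmp" and q :: "nat \<Rightarrow> real ^ 'm::finite" and q0 :: "nat \<Rightarrow> real"
    and C :: "'c set" and w :: "'c \<Rightarrow> real"
    and f :: "'c \<Rightarrow> ('n::finite \<Rightarrow> real) \<Rightarrow> (nat \<Rightarrow> real) \<Rightarrow> real"
    and A :: "'c \<Rightarrow> nat set"
  assumes sigma_pos: "\<sigma> > 0"
    and q_nz: "\<forall>i<k. q i \<noteq> 0"
    and C_fin: "finite C"
    and w_pos: "\<forall>c\<in>C. w c > 0"
    and f_pm1: "\<forall>c\<in>C. \<forall>x\<in>cubeN. \<forall>z\<in>cubeK k. f c x z \<in> {-1, 1}"
    and A_atoms: "\<forall>c\<in>C. A c \<subseteq> {..<k}"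
    and f_dep: "\<forall>c\<in>C. \<forall>x\<in>cubeN. \<forall>z\<in>cubeK k. \<forall>z'\<in>cubeK k.
                  (\<forall>i\<in>A c. z i = z' i) \<longrightarrow> f c x z = f c x z'"
begin

abbreviation Cs :: "(real ^ 'n) \<times> (real ^ 'm) \<Rightarrow> real" where
  "Cs \<equiv> smoothed_obj \<sigma> k rel q q0 C w f"

abbreviation coords :: "('n + nat) set" where
  "coords \<equiv> UNIV <+> {..<k}"

definition cube_constraint :: "'c \<Rightarrow> ('n + nat \<Rightarrow> real) \<Rightarrow> real" where
  "cube_constraint c v = f c (v \<circ> Inl) (v \<circ> Inr)"

definition atom_scale :: "nat \<Rightarrow> real" where
  "atom_scale i = sqrt 2 * norm (q i) * \<sigma>"

definition atom_arg :: "nat \<Rightarrow> real ^ 'm \<Rightarrow> real" where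
  "atom_arg i b = (q i \<bullet> b - q0 i) / atom_scale i"

definition atom_slope :: "nat \<Rightarrow> (real ^ 'n) \<times> (real ^ 'm) \<Rightarrow> real" where
  "atom_slope i h = q i \<bullet> snd h / atom_scale i"

(* The point (a, d(b)), with the coordinates of the atoms outside A c, on which f c does not
   depend, set to 0. *)
definition ml_point :: "'c \<Rightarrow> (real ^ 'n) \<times> (real ^ 'm) \<Rightarrow> 'n + nat \<Rightarrow> real" where
  "ml_point c p = case_sum (vec_nth (fst p))
     (\<lambda>i. if i \<in> A c then atom_mean \<sigma> (rel i) (q i) (q0 i) (snd p) else 0)"

definition ml_point' ::
  "'c \<Rightarrow> (real ^ 'n) \<times> (real ^ 'm) \<Rightarrow> (real ^ 'n) \<times> (real ^ 'm) \<Rightarrow> 'n + nat \<Rightarrow> real" where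
  "ml_point' c p h = case_sum (vec_nth (fst h))
     (\<lambda>i. if i \<in> A c then cmp_sign (rel i) * erf' (atom_arg i (snd p)) * atom_slope i h else 0)"

definition ml_point'' :: "'c \<Rightarrow> (real ^ 'n) \<times> (real ^ 'm) \<Rightarrow> (real ^ 'n) \<times> (real ^ 'm)
    \<Rightarrow> (real ^ 'n) \<times> (real ^ 'm) \<Rightarrow> 'n + nat \<Rightarrow> real" where
  "ml_point'' c p h u = case_sum (\<lambda>_. 0)
     (\<lambda>i. if i \<in> A c then cmp_sign (rel i) * erf'' (atom_arg i (snd p)) * atom_slope i h * atom_slope i u
          else 0)"

definition ml_point_bound :: "'c \<Rightarrow> (real ^ 'n) \<times> (real ^ 'm) \<Rightarrow> 'n + nat \<Rightarrow> real" where
  "ml_point_bound c h = case_sum (\<lambda>j. \<bar>fst h $ j\<bar>)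
     (\<lambda>i. if i \<in> A c then 2 / sqrt pi * \<bar>atom_slope i h\<bar> else 0)"

definition beta :: nat where
  "beta = Max (insert 0 {card {i \<in> A c. q i $ j \<noteq> 0} | c j. c \<in> C})"

definition gamma :: real where
  "gamma = sqrt 2 * real beta / (sqrt pi * \<sigma>)"

definition grad_factor :: real where
  "grad_factor = sqrt (real CARD('n) + real CARD('m) * gamma\<^sup>2)"

lemma cube_constraint_abs_le_1:
  assumes "c \<in> C" "v \<in> cube coords"
  shows "\<bar>cube_constraint c v\<bar> \<le> 1"
proof -
  have "v \<circ> Inl \<in> cubeN" "v \<circ> Inr \<in> cubeK k"
    using cube_Plus_comp[OF assms(2)] by (simp_all add: cubeN_def cubeK_def cube_def)
  then have "f c (v \<circ> Inl) (v \<circ> Inr) \<in> {-1, 1}"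
    using f_pm1 assms(1) by blast
  then show ?thesis
    by (auto simp: cube_constraint_def)
qed

lemma cube_constraint_flip:
  assumes "c \<in> C" "i \<in> {..<k} - A c" "v \<in> cube coords"
  shows "cube_constraint c (v(Inr i := - v (Inr i))) = cube_constraint c v"
proof -
  let ?v' = "v(Inr i := - v (Inr i))"
  have "?v' \<in> cube coords"
    using assms(2,3) by (intro cube_flip) auto
  then have "v \<circ> Inl \<in> cubeN" "v \<circ> Inr \<in> cubeK k" "?v' \<circ> Inr \<in> cubeK k"
    using cube_Plus_comp[OF assms(3)] cube_Plus_comp[of ?v'] by (simp_all add: cubeN_def cubeK_def cube_def)
  moreover have "\<forall>j\<in>A c. (v \<circ> Inr) j = (?v' \<circ> Inr) j"
    using assms(2) by auto
  ultimately have "f c (v \<circ> Inl) (v \<circ> Inr) = f c (v \<circ> Inl) (?v' \<circ> Inr)"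
    using f_dep assms(1) by blast
  moreover have "?v' \<circ> Inl = v \<circ> Inl"
    by (auto simp: fun_eq_iff)
  ultimately show ?thesis
    by (simp add: cube_constraint_def)
qed

lemma smoothed_obj_eq:
  "Cs p = (\<Sum>c\<in>C. w c * multilinear_deriv coords (cube_constraint c) {} (ml_point c p))"
  unfolding smoothed_obj_def
proof (intro sum.cong refl arg_cong[where f = "\<lambda>x. w _ * x"])
  fix c assume c: "c \<in> C"
  let ?d = "\<lambda>i. atom_mean \<sigma> (rel i) (q i) (q0 i) (snd p)"
  have "(\<Sum>S\<in>Pow UNIV. \<Sum>T\<in>Pow {..<k}. fourier_coeff k (f c) S T * (\<Prod>i\<in>S. fst p $ i) * (\<Prod>i\<in>T. ?d i))
      = multilinear_deriv coords (cube_constraint c) {} (case_sum (vec_nth (fst p)) ?d)"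
    using fourier_expansion_eq_multilinear_ext[of k "f c" "vec_nth (fst p)" ?d]
    by (simp add: cube_constraint_def[abs_def])
  also have "\<dots> = multilinear_deriv coords (cube_constraint c) {} (ml_point c p)"
    using c A_atoms cube_constraint_flip[OF c]
    by (intro multilinear_ext_eq_zero_irrelevant[where K = "Inr ` ({..<k} - A c)", symmetric])
       (auto simp: ml_point_def)
  finally show "(\<Sum>S\<in>Pow UNIV. \<Sum>T\<in>Pow {..<k}. fourier_coeff k (f c) S T * (\<Prod>i\<in>S. fst (p) $ i)
      * (\<Prod>i\<in>T. ?d i)) = multilinear_deriv coords (cube_constraint c) {} (ml_point c p)" .
qed

lemma abs_ml_point_le_1: "\<forall>j. \<bar>fst p $ j\<bar> \<le> 1 \<Longrightarrow> \<bar>ml_point c p r\<bar> \<le> 1"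
  by (cases r) (auto simp: ml_point_def abs_atom_mean_le_1)

lemma atom_arg_line_has_real_derivative:
  "((\<lambda>t. atom_arg i (snd (p + t *\<^sub>R h))) has_real_derivative atom_slope i h) (at t)"
proof -
  have "atom_arg i (snd (p + s *\<^sub>R h)) = (q i \<bullet> snd p - q0 i + s * (q i \<bullet> snd h)) / atom_scale i" for s
    by (simp add: atom_arg_def inner_add_right algebra_simps)
  then show ?thesis
    unfolding atom_slope_def by (simp only:) (intro DERIV_cdivide, auto intro!: derivative_eq_intros)
qed

lemma ml_point_line_has_real_derivative:
  "((\<lambda>t. ml_point c (p + t *\<^sub>R h) r) has_real_derivative ml_point' c (p + t *\<^sub>R h) h r) (at t)"
proof (cases r)
  case (Inl j)
  then show ?thesis
    by (auto intro!: derivative_eq_intros simp: ml_point_def ml_point'_def)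
next
  case (Inr i)
  have "atom_mean \<sigma> (rel i) (q i) (q0 i) (snd (p + s *\<^sub>R h))
      = cmp_sign (rel i) * erf (atom_arg i (snd (p + s *\<^sub>R h))) + cmp_offset (rel i)" for s
    by (simp add: atom_mean_eq atom_arg_def atom_scale_def)
  moreover have "((\<lambda>t. cmp_sign (rel i) * erf (atom_arg i (snd (p + t *\<^sub>R h))) + cmp_offset (rel i))
      has_real_derivative cmp_sign (rel i) * (erf' (atom_arg i (snd (p + t *\<^sub>R h))) * atom_slope i h)) (at t)"
    by (rule DERIV_cong[OF DERIV_add[OF DERIV_cmult[OF DERIV_fun_erf[OF atom_arg_line_has_real_derivative]]
          DERIV_const]]) simp
  ultimately show ?thesis
    using Inr by (simp add: ml_point_def ml_point'_def mult.assoc)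
qed

lemma ml_point'_line_has_real_derivative:
  "((\<lambda>t. ml_point' c (p + t *\<^sub>R h) u r) has_real_derivative ml_point'' c (p + t *\<^sub>R h) h u r) (at t)"
proof (cases r)
  case (Inl j)
  then show ?thesis
    by (simp add: ml_point'_def ml_point''_def)
next
  case (Inr i)
  have "((\<lambda>t. cmp_sign (rel i) * erf' (atom_arg i (snd (p + t *\<^sub>R h))) * atom_slope i u)
      has_real_derivative cmp_sign (rel i) * (erf'' (atom_arg i (snd (p + t *\<^sub>R h))) * atom_slope i h)
        * atom_slope i u) (at t)"
    by (intro DERIV_cmult_right DERIV_cmult DERIV_fun_erf' atom_arg_line_has_real_derivative)
  then show ?thesis
    using Inr by (simp add: ml_point'_def ml_point''_def mult.assoc)
qed

lemma abs_ml_point'_le: "\<bar>ml_point' c p h r\<bar> \<le> ml_point_bound c h r"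
proof (cases r)
  case (Inr i)
  have "\<bar>cmp_sign (rel i)\<bar> * \<bar>erf' (atom_arg i (snd p))\<bar> * \<bar>atom_slope i h\<bar>
      \<le> 1 * (2 / sqrt pi) * \<bar>atom_slope i h\<bar>"
    by (intro mult_mono abs_cmp_sign_le_1 abs_erf'_le) auto
  then show ?thesis
    using Inr by (simp add: ml_point'_def ml_point_bound_def abs_mult)
qed (simp add: ml_point'_def ml_point_bound_def)

lemma abs_ml_point''_le: "\<bar>ml_point'' c p h u r\<bar> \<le> ml_point_bound c u r * ml_point_bound c h r"
proof (cases r)
  case (Inr i)
  have "\<bar>cmp_sign (rel i)\<bar> * \<bar>erf'' (atom_arg i (snd p))\<bar> * \<bar>atom_slope i h\<bar> * \<bar>atom_slope i u\<bar>
      \<le> 1 * (2 / sqrt pi)\<^sup>2 * \<bar>atom_slope i h\<bar> * \<bar>atom_slope i u\<bar>"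
    by (intro mult_mono abs_cmp_sign_le_1 abs_erf''_le) auto
  then show ?thesis
    using Inr by (simp add: ml_point''_def ml_point_bound_def abs_mult power2_eq_square mult_ac)
qed (simp add: ml_point''_def ml_point_bound_def)

lemma card_le_beta: "c \<in> C \<Longrightarrow> card {i \<in> A c. q i $ j \<noteq> 0} \<le> beta"
proof -
  assume c: "c \<in> C"
  have "{card {i \<in> A c. q i $ j \<noteq> 0} | c j. c \<in> C} = (\<lambda>(c, j). card {i \<in> A c. q i $ j \<noteq> 0}) ` (C \<times> UNIV)"
    by auto
  then have "finite {card {i \<in> A c. q i $ j \<noteq> 0} | c j. c \<in> C}"
    using C_fin by simp
  then show ?thesis
    unfolding beta_def using c by (intro Max_ge) auto
qed

lemma gamma_nonneg: "0 \<le> gamma"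
  unfolding gamma_def using sigma_pos by simp

lemma grad_factor_nonneg: "0 \<le> grad_factor"
  by (simp add: grad_factor_def)

(* Every coordinate y_l has a nonzero coefficient in at most beta atoms of c, so summing the
   bounds |q_i \<bullet> h| \<le> norm (q i) * (\<Sum>l with q_i,l \<noteq> 0. |h_l|) over the atoms of c counts
   each |h_l| at most beta times. *)
lemma sum_atom_bound_le:
  assumes c: "c \<in> C"
  shows "(\<Sum>i\<in>A c. 2 / sqrt pi * \<bar>atom_slope i h\<bar>) \<le> gamma * (\<Sum>l\<in>UNIV. \<bar>snd h $ l\<bar>)"
proof -
  define N where "N i = (\<Sum>l\<in>UNIV. if q i $ l \<noteq> 0 then \<bar>snd h $ l\<bar> else 0)" for i
  define \<kappa> where "\<kappa> = 2 / (sqrt pi * sqrt 2 * \<sigma>)"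
  have Ac: "A c \<subseteq> {..<k}"
    using A_atoms c by auto
  have "2 / sqrt pi * \<bar>atom_slope i h\<bar> \<le> \<kappa> * N i" if "i \<in> A c" for i
  proof -
    have nq: "0 < norm (q i)"
      using q_nz Ac that by auto
    have "2 / sqrt pi * \<bar>atom_slope i h\<bar> = 2 / sqrt pi * \<bar>q i \<bullet> snd h\<bar> / (sqrt 2 * norm (q i) * \<sigma>)"
      using sigma_pos by (simp add: atom_slope_def atom_scale_def abs_divide abs_mult)
    also have "\<dots> \<le> 2 / sqrt pi * (norm (q i) * N i) / (sqrt 2 * norm (q i) * \<sigma>)"
      using abs_inner_le_norm_mult_sum_support[of "q i" "snd h"] sigma_pos nq unfolding N_def
      by (intro divide_right_mono mult_left_mono) auto
    also have "\<dots> = \<kappa> * N i"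
      using nq by (simp add: \<kappa>_def field_simps)
    finally show ?thesis .
  qed
  then have "(\<Sum>i\<in>A c. 2 / sqrt pi * \<bar>atom_slope i h\<bar>) \<le> \<kappa> * (\<Sum>i\<in>A c. N i)"
    by (simp add: sum_distrib_left sum_mono)
  also have "(\<Sum>i\<in>A c. N i) = (\<Sum>l\<in>UNIV. \<bar>snd h $ l\<bar> * real (card {i \<in> A c. q i $ l \<noteq> 0}))"
  proof -
    have "finite (A c)"
      using Ac finite_subset by blast
    then have "(\<Sum>i\<in>A c. if q i $ l \<noteq> 0 then \<bar>snd h $ l\<bar> else 0)
        = \<bar>snd h $ l\<bar> * real (card {i \<in> A c. q i $ l \<noteq> 0})" for l
      by (simp add: sum.inter_filter[symmetric])
    then show ?thesis
      unfolding N_def by (subst sum.swap) simp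
  qed
  also have "\<kappa> * \<dots> \<le> \<kappa> * (\<Sum>l\<in>UNIV. \<bar>snd h $ l\<bar> * real beta)"
    using card_le_beta[OF c] sigma_pos unfolding \<kappa>_def by (intro mult_left_mono sum_mono) auto
  also have "\<dots> = gamma * (\<Sum>l\<in>UNIV. \<bar>snd h $ l\<bar>)"
  proof -
    have "\<kappa> = sqrt 2 / (sqrt pi * \<sigma>)"
      using sigma_pos real_sqrt_mult_self[of 2] unfolding \<kappa>_def by (simp add: field_simps)
    then show ?thesis
      by (simp add: gamma_def sum_distrib_left sum_distrib_right sum_divide_distrib mult_ac)
  qed
  finally show ?thesis .
qed

lemma sum_ml_point_bound_le:
  assumes c: "c \<in> C"
  shows "sum (ml_point_bound c h) coords \<le> grad_factor * norm h"
proof -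
  have "A c \<subseteq> {..<k}"
    using A_atoms c by auto
  then have "sum (ml_point_bound c h) coords
      = (\<Sum>j\<in>UNIV. \<bar>fst h $ j\<bar>) + (\<Sum>i\<in>A c. 2 / sqrt pi * \<bar>atom_slope i h\<bar>)"
    by (simp add: sum.Plus ml_point_bound_def sum.If_cases Int_absorb1)
  also have "\<dots> \<le> sqrt (real CARD('n)) * norm (fst h) + gamma * (sqrt (real CARD('m)) * norm (snd h))"
    by (intro add_mono order_trans[OF sum_atom_bound_le[OF c]] mult_left_mono gamma_nonneg
        sum_abs_le_sqrt_card_mult_norm)
  also have "\<dots> \<le> norm (sqrt (real CARD('n)), gamma * sqrt (real CARD('m))) * norm (norm (fst h), norm (snd h))"
    using norm_cauchy_schwarz[of "(sqrt (real CARD('n)), gamma * sqrt (real CARD('m)))"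
        "(norm (fst h), norm (snd h))"]
    by (simp add: mult_ac)
  also have "\<dots> = grad_factor * norm h"
    using gamma_nonneg by (simp add: grad_factor_def norm_Pair norm_prod_def power_mult_distrib)
  finally show ?thesis .
qed

definition dir_deriv :: "(real ^ 'n) \<times> (real ^ 'm) \<Rightarrow> (real ^ 'n) \<times> (real ^ 'm) \<Rightarrow> real" where
  "dir_deriv p h = (\<Sum>c\<in>C. w c * (\<Sum>r\<in>coords.
     ml_point' c p h r * multilinear_deriv coords (cube_constraint c) {r} (ml_point c p)))"

definition dir_deriv2 ::
  "(real ^ 'n) \<times> (real ^ 'm) \<Rightarrow> (real ^ 'n) \<times> (real ^ 'm) \<Rightarrow> (real ^ 'n) \<times> (real ^ 'm) \<Rightarrow> real" where
  "dir_deriv2 p h u = (\<Sum>c\<in>C. w c * (\<Sum>r\<in>coords.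
     ml_point' c p u r * (\<Sum>s\<in>coords - {r}.
        ml_point' c p h s * multilinear_deriv coords (cube_constraint c) (insert s {r}) (ml_point c p))
     + ml_point'' c p h u r * multilinear_deriv coords (cube_constraint c) {r} (ml_point c p)))"

lemma smoothed_obj_line_has_real_derivative:
  "((\<lambda>t. Cs (p + t *\<^sub>R h)) has_real_derivative dir_deriv (p + t *\<^sub>R h) h) (at t)"
proof -
  have "((\<lambda>t. multilinear_deriv coords (cube_constraint c) {} (ml_point c (p + t *\<^sub>R h)))
      has_real_derivative (\<Sum>r\<in>coords. ml_point' c (p + t *\<^sub>R h) h r
        * multilinear_deriv coords (cube_constraint c) {r} (ml_point c (p + t *\<^sub>R h)))) (at t)" for c
    using multilinear_deriv_has_real_derivative[of coords "{}" "\<lambda>t. ml_point c (p + t *\<^sub>R h)"]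
      ml_point_line_has_real_derivative by simp
  then show ?thesis
    unfolding smoothed_obj_eq dir_deriv_def by (intro DERIV_sum DERIV_cmult)
qed

lemma dir_deriv_line_has_real_derivative:
  "((\<lambda>t. dir_deriv (p + t *\<^sub>R h) u) has_real_derivative dir_deriv2 (p + t *\<^sub>R h) h u) (at t)"
proof -
  have "((\<lambda>t. multilinear_deriv coords (cube_constraint c) {r} (ml_point c (p + t *\<^sub>R h)))
      has_real_derivative (\<Sum>s\<in>coords - {r}. ml_point' c (p + t *\<^sub>R h) h s
        * multilinear_deriv coords (cube_constraint c) (insert s {r}) (ml_point c (p + t *\<^sub>R h)))) (at t)"
    if "r \<in> coords" for c r
    using multilinear_deriv_has_real_derivative[of coords "{r}" "\<lambda>t. ml_point c (p + t *\<^sub>R h)"]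
      ml_point_line_has_real_derivative that by simp
  then show ?thesis
    unfolding dir_deriv_def dir_deriv2_def
    by (intro DERIV_sum DERIV_cmult DERIV_mult' ml_point'_line_has_real_derivative)
qed

lemma abs_dir_deriv_le:
  assumes "\<forall>j. \<bar>fst p $ j\<bar> \<le> 1"
  shows "\<bar>dir_deriv p h\<bar> \<le> (\<Sum>c\<in>C. w c) * (grad_factor * norm h)"
  unfolding dir_deriv_def
proof (rule sum_weighted_abs_le)
  show "\<forall>c\<in>C. 0 \<le> w c"
    using w_pos by auto
  show "\<forall>c\<in>C. \<bar>\<Sum>r\<in>coords. ml_point' c p h r * multilinear_deriv coords (cube_constraint c) {r} (ml_point c p)\<bar>
      \<le> grad_factor * norm h"
  proof
    fix c assume c: "c \<in> C"
    have "\<bar>\<Sum>r\<in>coords. ml_point' c p h r * multilinear_deriv coords (cube_constraint c) {r} (ml_point c p)\<bar>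
        \<le> sum (ml_point_bound c h) coords"
      using assms c by (intro abs_sum_multilinear_deriv_le)
        (auto simp: cube_constraint_abs_le_1 abs_ml_point_le_1 abs_ml_point'_le)
    also have "\<dots> \<le> grad_factor * norm h"
      by (rule sum_ml_point_bound_le[OF c])
    finally show "\<bar>\<Sum>r\<in>coords. ml_point' c p h r * multilinear_deriv coords (cube_constraint c) {r} (ml_point c p)\<bar>
        \<le> grad_factor * norm h" .
  qed
qed

lemma abs_dir_deriv2_le:
  assumes "\<forall>j. \<bar>fst p $ j\<bar> \<le> 1"
  shows "\<bar>dir_deriv2 p h u\<bar> \<le> (\<Sum>c\<in>C. w c) * ((grad_factor * norm u) * (grad_factor * norm h))"
  unfolding dir_deriv2_def
proof (rule sum_weighted_abs_le)
  show "\<forall>c\<in>C. 0 \<le> w c"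
    using w_pos by auto
  show "\<forall>c\<in>C. \<bar>\<Sum>r\<in>coords. ml_point' c p u r * (\<Sum>s\<in>coords - {r}.
        ml_point' c p h s * multilinear_deriv coords (cube_constraint c) (insert s {r}) (ml_point c p))
      + ml_point'' c p h u r * multilinear_deriv coords (cube_constraint c) {r} (ml_point c p)\<bar>
      \<le> (grad_factor * norm u) * (grad_factor * norm h)"
  proof
    fix c assume c: "c \<in> C"
    have "\<bar>\<Sum>r\<in>coords. ml_point' c p u r * (\<Sum>s\<in>coords - {r}.
        ml_point' c p h s * multilinear_deriv coords (cube_constraint c) (insert s {r}) (ml_point c p))
      + ml_point'' c p h u r * multilinear_deriv coords (cube_constraint c) {r} (ml_point c p)\<bar>
      \<le> sum (ml_point_bound c u) coords * sum (ml_point_bound c h) coords"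
      using assms c by (intro abs_sum_multilinear_deriv2_le)
        (auto simp: cube_constraint_abs_le_1 abs_ml_point_le_1 abs_ml_point'_le abs_ml_point''_le)
    also have "\<dots> \<le> (grad_factor * norm u) * (grad_factor * norm h)"
      by (intro mult_mono sum_ml_point_bound_le[OF c] sum_nonneg)
        (auto intro: order_trans[OF abs_ge_zero abs_ml_point'_le] simp: grad_factor_nonneg)
    finally show "\<bar>\<Sum>r\<in>coords. ml_point' c p u r * (\<Sum>s\<in>coords - {r}.
        ml_point' c p h s * multilinear_deriv coords (cube_constraint c) (insert s {r}) (ml_point c p))
      + ml_point'' c p h u r * multilinear_deriv coords (cube_constraint c) {r} (ml_point c p)\<bar>
      \<le> (grad_factor * norm u) * (grad_factor * norm h)" .
  qed
qed

lemma ml_point_differentiable: "(\<lambda>p. ml_point c p r) differentiable (at p)"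
proof (cases r)
  case (Inl j)
  have "bounded_linear (\<lambda>p :: (real ^ 'n) \<times> (real ^ 'm). fst p $ j)"
    by (rule bounded_linear_compose[OF bounded_linear_vec_nth bounded_linear_fst])
  then show ?thesis
    using Inl by (simp add: ml_point_def bounded_linear_imp_differentiable)
next
  case (Inr i)
  have "bounded_linear (\<lambda>p :: (real ^ 'n) \<times> (real ^ 'm). q i \<bullet> snd p / atom_scale i)"
    by (intro bounded_linear_compose[OF bounded_linear_divide] bounded_linear_inner_right_comp
        bounded_linear_snd)
  then have "(\<lambda>p :: (real ^ 'n) \<times> (real ^ 'm). q i \<bullet> snd p / atom_scale i - q0 i / atom_scale i)
      differentiable (at p)"
    by (intro differentiable_diff bounded_linear_imp_differentiable differentiable_const)
  then have "(\<lambda>p. atom_arg i (snd p)) differentiable (at p)"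
    by (simp add: atom_arg_def diff_divide_distrib)
  moreover have "erf differentiable (at x)" for x
    using erf_has_real_derivative[of x]
    by (auto intro: differentiableI dest: has_field_derivative_imp_has_derivative)
  ultimately have "(erf \<circ> (\<lambda>p. atom_arg i (snd p))) differentiable (at p)"
    by (rule differentiable_chain_at)
  then have "(\<lambda>p. cmp_sign (rel i) * erf (atom_arg i (snd p)) + cmp_offset (rel i)) differentiable (at p)"
    by (intro differentiable_add differentiable_mult differentiable_const) (simp add: o_def)
  then show ?thesis
    using Inr by (cases "i \<in> A c") (simp_all add: ml_point_def atom_mean_eq atom_arg_def atom_scale_def)
qed

lemma smoothed_obj_differentiable: "Cs differentiable (at p)"
proof -
  have "Cs = (\<lambda>p. \<Sum>c\<in>C. w c * multilinear_deriv coords (cube_constraint c) {} (ml_point c p))"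
    by (simp add: fun_eq_iff smoothed_obj_eq)
  then show ?thesis
    unfolding multilinear_deriv_def
    by (simp only:) (intro differentiable_sum ballI differentiable_mult differentiable_const
        differentiable_prod differentiable_divide differentiable_add ml_point_differentiable;
        simp add: C_fin finite_cube)
qed

lemma grad_inner_eq_dir_deriv: "grad Cs p \<bullet> h = dir_deriv p h"
  using grad_inner_eq_line_deriv[OF smoothed_obj_differentiable smoothed_obj_line_has_real_derivative[of p h 0]]
  by simp

lemma abs_fst_segment_le_1:
  fixes p p' :: "(real ^ 'n) \<times> (real ^ 'm)"
  assumes "\<forall>j. \<bar>fst p $ j\<bar> \<le> 1" "\<forall>j. \<bar>fst p' $ j\<bar> \<le> 1" "0 \<le> t" "t \<le> 1"
  shows "\<forall>j. \<bar>fst (p + t *\<^sub>R (p' - p)) $ j\<bar> \<le> 1"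
proof
  fix j
  show "\<bar>fst (p + t *\<^sub>R (p' - p)) $ j\<bar> \<le> 1"
    using assms abs_segment_le[of "fst p $ j" 1 "fst p' $ j" t] by simp
qed

lemma abs_smoothed_obj_diff_le:
  assumes "\<forall>j. \<bar>fst p $ j\<bar> \<le> 1" "\<forall>j. \<bar>fst p' $ j\<bar> \<le> 1"
  shows "\<bar>Cs p' - Cs p\<bar> \<le> (\<Sum>c\<in>C. w c) * grad_factor * norm (p' - p)"
proof -
  have "\<bar>Cs (p + 1 *\<^sub>R (p' - p)) - Cs (p + 0 *\<^sub>R (p' - p))\<bar> \<le> (\<Sum>c\<in>C. w c) * (grad_factor * norm (p' - p))"
    using smoothed_obj_line_has_real_derivative abs_dir_deriv_le[OF abs_fst_segment_le_1[OF assms]]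
    by (rule abs_diff_le_of_deriv_bound)
  then show ?thesis
    by (simp add: mult.assoc)
qed

lemma norm_grad_smoothed_obj_diff_le:
  assumes "\<forall>j. \<bar>fst p $ j\<bar> \<le> 1" "\<forall>j. \<bar>fst p' $ j\<bar> \<le> 1"
  shows "norm (grad Cs p' - grad Cs p) \<le> (\<Sum>c\<in>C. w c) * grad_factor\<^sup>2 * norm (p' - p)"
proof -
  let ?h = "p' - p"
  have "norm (grad Cs (p + 1 *\<^sub>R ?h) - grad Cs (p + 0 *\<^sub>R ?h)) \<le> (\<Sum>c\<in>C. w c) * grad_factor\<^sup>2 * norm ?h"
  proof (rule norm_diff_le_of_inner_deriv_bound)
    show "((\<lambda>t. grad Cs (p + t *\<^sub>R ?h) \<bullet> u) has_real_derivative dir_deriv2 (p + t *\<^sub>R ?h) ?h u) (at t)"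
      for u t
      unfolding grad_inner_eq_dir_deriv by (rule dir_deriv_line_has_real_derivative)
    show "\<bar>dir_deriv2 (p + t *\<^sub>R ?h) ?h u\<bar> \<le> (\<Sum>c\<in>C. w c) * grad_factor\<^sup>2 * norm ?h * norm u"
      if "0 \<le> t" "t \<le> 1" for u t
      using abs_dir_deriv2_le[OF abs_fst_segment_le_1[OF assms that], of ?h u] by (simp add: power2_eq_square mult_ac)
    show "0 \<le> (\<Sum>c\<in>C. w c) * grad_factor\<^sup>2 * norm ?h"
      using w_pos by (simp add: sum_nonneg less_imp_le)
  qed
  then show ?thesis
    by simp
qed

lemma abs_smoothed_obj_remainder_le:
  assumes "\<forall>j. \<bar>fst p $ j\<bar> \<le> 1" "\<forall>j. \<bar>fst p' $ j\<bar> \<le> 1"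
  shows "\<bar>Cs p' - Cs p - grad Cs p \<bullet> (p' - p)\<bar> \<le> (\<Sum>c\<in>C. w c) * grad_factor\<^sup>2 / 2 * (norm (p' - p))\<^sup>2"
proof -
  let ?h = "p' - p"
  have "\<bar>Cs (p + 1 *\<^sub>R ?h) - Cs (p + 0 *\<^sub>R ?h) - dir_deriv (p + 0 *\<^sub>R ?h) ?h\<bar>
      \<le> (\<Sum>c\<in>C. w c) * grad_factor\<^sup>2 * (norm ?h)\<^sup>2 / 2"
  proof (rule abs_remainder_le_of_deriv_lipschitz)
    show "((\<lambda>t. Cs (p + t *\<^sub>R ?h)) has_real_derivative dir_deriv (p + t *\<^sub>R ?h) ?h) (at t)" for t
      by (rule smoothed_obj_line_has_real_derivative)
    show "\<bar>dir_deriv (p + t *\<^sub>R ?h) ?h - dir_deriv (p + 0 *\<^sub>R ?h) ?h\<bar>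
        \<le> (\<Sum>c\<in>C. w c) * grad_factor\<^sup>2 * (norm ?h)\<^sup>2 * t" if t: "0 \<le> t" "t \<le> 1" for t
    proof -
      have "\<bar>dir_deriv (p + t *\<^sub>R ?h) ?h - dir_deriv (p + 0 *\<^sub>R ?h) ?h\<bar>
          = \<bar>(grad Cs (p + t *\<^sub>R ?h) - grad Cs p) \<bullet> ?h\<bar>"
        by (simp add: grad_inner_eq_dir_deriv[symmetric] inner_diff_left)
      also have "\<dots> \<le> norm (grad Cs (p + t *\<^sub>R ?h) - grad Cs p) * norm ?h"
        by (rule Cauchy_Schwarz_ineq2)
      also have "\<dots> \<le> (\<Sum>c\<in>C. w c) * grad_factor\<^sup>2 * norm (t *\<^sub>R ?h) * norm ?h"
        using norm_grad_smoothed_obj_diff_le[OF assms(1) abs_fst_segment_le_1[OF assms t]]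
        by (intro mult_right_mono) simp_all
      also have "\<dots> = (\<Sum>c\<in>C. w c) * grad_factor\<^sup>2 * (norm ?h)\<^sup>2 * t"
        using t by (simp add: power2_eq_square)
      finally show ?thesis .
    qed
  qed
  then show ?thesis
    by (simp add: grad_inner_eq_dir_deriv)
qed

lemma grad_factor_le: "grad_factor \<le> sqrt (real (CARD('n) + CARD('m))) * max 1 gamma"
proof -
  have "real CARD('n) + real CARD('m) * gamma\<^sup>2
      \<le> real CARD('n) * (max 1 gamma)\<^sup>2 + real CARD('m) * (max 1 gamma)\<^sup>2"
    using gamma_nonneg
    by (intro add_mono mult_left_mono) (auto simp: le_max_iff_disj power_mono one_le_power)
  then have "grad_factor \<le> sqrt (real (CARD('n) + CARD('m)) * (max 1 gamma)\<^sup>2)"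
    unfolding grad_factor_def by (simp add: distrib_right)
  then show ?thesis
    by (simp add: real_sqrt_mult)
qed

definition rho :: real where
  "rho = (\<Sum>c\<in>C. w c) * sqrt (real (CARD('n) + CARD('m))) * max 1 gamma"

lemma sum_weights_mult_grad_factor_le: "(\<Sum>c\<in>C. w c) * grad_factor \<le> rho"
  using w_pos grad_factor_le by (simp add: rho_def mult.assoc mult_left_mono sum_nonneg less_imp_le)

lemma sum_weights_mult_grad_factor2_le: "(\<Sum>c\<in>C. w c) * grad_factor\<^sup>2 \<le> grad_factor * rho"
  using mult_left_mono[OF sum_weights_mult_grad_factor_le grad_factor_nonneg]
  by (simp add: power2_eq_square mult_ac)

end

theorem proposition2:
  fixes \<sigma> :: real and k :: nat
    and rel :: "nat \<Rightarrow> cmp" and q :: "nat \<Rightarrow> real ^ 'm::finite" and q0 :: "nat \<Rightarrow> real"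
    and C :: "'c set" and w :: "'c \<Rightarrow> real"
    and f :: "'c \<Rightarrow> ('n::finite \<Rightarrow> real) \<Rightarrow> (nat \<Rightarrow> real) \<Rightarrow> real"
    and A :: "'c \<Rightarrow> nat set"
  assumes sigma_pos: "\<sigma> > 0"
    and q_nz: "\<forall>i<k. q i \<noteq> 0"
    and C_fin: "finite C"
    and w_pos: "\<forall>c\<in>C. w c > 0"
    and f_pm1: "\<forall>c\<in>C. \<forall>x\<in>cubeN. \<forall>z\<in>cubeK k. f c x z \<in> {-1, 1}"
    and A_atoms: "\<forall>c\<in>C. A c \<subseteq> {..<k}"
    and f_dep: "\<forall>c\<in>C. \<forall>x\<in>cubeN. \<forall>z\<in>cubeK k. \<forall>z'\<in>cubeK k.
                  (\<forall>i\<in>A c. z i = z' i) \<longrightarrow> f c x z = f c x z'"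
  shows "let Cs = smoothed_obj \<sigma> k rel q q0 C w f;
      \<alpha> = (\<Sum>c\<in>C. w c);
      \<beta> = Max (insert 0 {card {i \<in> A c. q i $ j \<noteq> 0} | c j. c \<in> C});
      \<gamma> = sqrt 2 * real \<beta> / (sqrt pi * \<sigma>);
      \<rho> = \<alpha> * sqrt (real (CARD('n) + CARD('m))) * max 1 \<gamma>;
      L = sqrt (real CARD('n) + real CARD('m) * \<gamma>\<^sup>2) * \<rho>
    in (\<forall>p. Cs differentiable (at p)) \<and>
    (\<forall>a a' :: real ^ 'n. \<forall>b b' :: real ^ 'm.
       (\<forall>i. \<bar>a $ i\<bar> \<le> 1) \<longrightarrow> (\<forall>i. \<bar>a' $ i\<bar> \<le> 1) \<longrightarrow>
         \<bar>Cs (a', b') - Cs (a, b)\<bar> \<le> \<rho> * sqrt ((norm (a' - a))\<^sup>2 + (norm (b' - b))\<^sup>2)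
       \<and> norm (grad Cs (a', b') - grad Cs (a, b))
           \<le> L * sqrt ((norm (a' - a))\<^sup>2 + (norm (b' - b))\<^sup>2)
       \<and> \<bar>Cs (a', b') - Cs (a, b) - fst (grad Cs (a, b)) \<bullet> (a' - a)
              - snd (grad Cs (a, b)) \<bullet> (b' - b)\<bar>
           \<le> L / 2 * ((norm (a' - a))\<^sup>2 + (norm (b' - b))\<^sup>2))"
proof -
  interpret smoothed_objective \<sigma> k rel q q0 C w f A
    using sigma_pos q_nz C_fin w_pos f_pm1 A_atoms f_dep by (rule smoothed_objective.intro)
  show ?thesis
    unfolding Let_def beta_def[symmetric] gamma_def[symmetric] grad_factor_def[symmetric] rho_def[symmetric]
  proof (intro conjI allI impI smoothed_obj_differentiable)
    fix a a' :: "real ^ 'n" and b b' :: "real ^ 'm"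
    assume "\<forall>i. \<bar>a $ i\<bar> \<le> 1" "\<forall>i. \<bar>a' $ i\<bar> \<le> 1"
    then have box: "\<forall>j. \<bar>fst (a, b) $ j\<bar> \<le> 1" "\<forall>j. \<bar>fst (a', b') $ j\<bar> \<le> 1"
      by simp_all
    have dist: "sqrt ((norm (a' - a))\<^sup>2 + (norm (b' - b))\<^sup>2) = norm ((a', b') - (a, b))"
      by (simp add: norm_Pair)
    show "\<bar>Cs (a', b') - Cs (a, b)\<bar> \<le> rho * sqrt ((norm (a' - a))\<^sup>2 + (norm (b' - b))\<^sup>2)"
      unfolding dist using sum_weights_mult_grad_factor_le
      by (intro order_trans[OF abs_smoothed_obj_diff_le[OF box]] mult_right_mono) simp_all
    show "norm (grad Cs (a', b') - grad Cs (a, b))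
        \<le> grad_factor * rho * sqrt ((norm (a' - a))\<^sup>2 + (norm (b' - b))\<^sup>2)"
      unfolding dist using sum_weights_mult_grad_factor2_le
      by (intro order_trans[OF norm_grad_smoothed_obj_diff_le[OF box]] mult_right_mono) simp_all
    have "Cs (a', b') - Cs (a, b) - fst (grad Cs (a, b)) \<bullet> (a' - a) - snd (grad Cs (a, b)) \<bullet> (b' - b)
        = Cs (a', b') - Cs (a, b) - grad Cs (a, b) \<bullet> ((a', b') - (a, b))"
      by (simp add: inner_prod_def)
    moreover have "(norm (a' - a))\<^sup>2 + (norm (b' - b))\<^sup>2 = (norm ((a', b') - (a, b)))\<^sup>2"
      by (simp add: norm_Pair)
    ultimately show "\<bar>Cs (a', b') - Cs (a, b) - fst (grad Cs (a, b)) \<bullet> (a' - a) - snd (grad Cs (a, b)) \<bullet> (b' - b)\<bar>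
        \<le> grad_factor * rho / 2 * ((norm (a' - a))\<^sup>2 + (norm (b' - b))\<^sup>2)"
      using sum_weights_mult_grad_factor2_le
      by (simp only:) (intro order_trans[OF abs_smoothed_obj_remainder_le[OF box]] mult_right_mono
          divide_right_mono; simp)
  qed
qed

end
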